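(* Let $U:\mathbb{N}\to\mathbb{N}$ be any function with $U(x)\ge p_{x+1}-1$ for all integers $x\ge 0$. For integers $j\ge 2$ define \[ I(j)=\left\lfloor \frac{1}{1+\sum_{k=2}^{j-1}\left\lfloor \frac{\gcd(k,j)}{k}\right\rfloor}\right\rfloor, \] for integers $i\ge 1$ define $S(i)=\sum_{j=2}^{i} I(j)$ (so $S(1)=0$), for integers $i\ge 1$, $x\ge 0$ define \[ A(i,x)=\left\lfloor \frac{1}{1+\left\lfloor \frac{S(i)}{x+1}\right\rfloor}\right\rfloor, \] and define $f_{U}(x)=1+\sum_{i=1}^{U(x)} A(i,x)$. Then for every integer $x\ge 0$, $f_{U}(x)=p_{x+1}$.
   Context: $\mathbb{N}=\{0,1,2,\dots\}$. $p_n$ denotes the $n$-th prime ($p_1=2$, $p_2=3,\dots$). $\lfloor\cdot\rfloor$ is the floor function and $\gcd$ the usual greatest common divisor; empty sums are $0$. *)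

theory Defs
  imports Complex_Main "HOL-Computational_Algebra.Primes"
begin

(* p n : the n-th prime, 1-indexed (p 1 = 2, p 2 = 3, ...):
   the unique prime q such that exactly n primes are \<le> q. *)
definition nthp :: "nat \<Rightarrow> nat" where
  "nthp n = (THE q. prime q \<and> card {r. prime r \<and> r \<le> q} = n)"

definition I_fun :: "nat \<Rightarrow> int" where
  "I_fun j = \<lfloor>1 / (1 + (\<Sum>k=2..j-1. real_of_int \<lfloor>real (gcd k j) / real k\<rfloor>))\<rfloor>"

definition S_fun :: "nat \<Rightarrow> int" where
  "S_fun i = (\<Sum>j=2..i. I_fun j)"

definition A_fun :: "nat \<Rightarrow> nat \<Rightarrow> int" where
  "A_fun i x = \<lfloor>1 / (1 + real_of_int \<lfloor>real_of_int (S_fun i) / real (x + 1)\<rfloor>)\<rfloor>"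

definition f_U :: "(nat \<Rightarrow> nat) \<Rightarrow> nat \<Rightarrow> int" where
  "f_U U x = 1 + (\<Sum>i=1..U x. A_fun i x)"

end

theory Submission
  imports Defs
begin

(* Each expression of the form floor(1/(1+t)) with t a nonnegative integer is the indicator of t = 0.
   The inner sum of I(j) counts the divisors of j in [2, j-1], so I is the indicator of primality
   and S is the prime-counting function pi. Hence A(i,x) is the indicator of pi(i) <= x, which holds
   exactly for i < p_(x+1); as U(x) >= p_(x+1) - 1, the sum defining f_U(x) equals p_(x+1) - 1. *)

definition primes_pi :: "nat \<Rightarrow> nat" where
  "primes_pi n = card {p. prime p \<and> p \<le> n}"

lemma finite_primes_le: "finite {p::nat. prime p \<and> p \<le> n}"
  by auto

lemma primes_pi_0 [simp]: "primes_pi 0 = 0"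
  unfolding primes_pi_def by auto

lemma primes_pi_Suc: "primes_pi (Suc n) = primes_pi n + (if prime (Suc n) then 1 else 0)"
proof -
  have "{p. prime p \<and> p \<le> Suc n} =
      (if prime (Suc n) then insert (Suc n) {p. prime p \<and> p \<le> n} else {p. prime p \<and> p \<le> n})"
    using le_Suc_eq by auto
  then show ?thesis
    unfolding primes_pi_def using finite_primes_le[of n] by auto
qed

lemma primes_pi_mono: "m \<le> n \<Longrightarrow> primes_pi m \<le> primes_pi n"
  unfolding primes_pi_def by (rule card_mono[OF finite_primes_le]) auto

lemma primes_pi_less_prime:
  assumes "prime p" "n < p"
  shows "primes_pi n < primes_pi p"
proof -
  have "{q. prime q \<and> q \<le> n} \<subseteq> {q. prime q \<and> q \<le> p}"
    "p \<in> {q. prime q \<and> q \<le> p}" "p \<notin> {q. prime q \<and> q \<le> n}"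
    using assms by auto
  then have "{q. prime q \<and> q \<le> n} \<subset> {q. prime q \<and> q \<le> p}"
    by blast
  then show ?thesis
    unfolding primes_pi_def by (rule psubset_card_mono[OF finite_primes_le])
qed

lemma primes_pi_unbounded: "\<exists>m. n \<le> primes_pi m"
proof (induction n)
  case 0
  then show ?case by simp
next
  case (Suc n)
  then obtain m where "n \<le> primes_pi m" by blast
  obtain p where "prime p" "m < p"
    using bigger_prime[of m] by blast
  then have "primes_pi m < primes_pi p"
    by (rule primes_pi_less_prime)
  with \<open>n \<le> primes_pi m\<close> show ?case by (intro exI[of _ p]) simp
qed

lemma ex_prime_primes_pi_eq:
  assumes "n \<ge> 1"
  shows "\<exists>p. prime p \<and> primes_pi p = n"
proof -
  define m where "m = (LEAST m. n \<le> primes_pi m)"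
  have m: "n \<le> primes_pi m"
    unfolding m_def using primes_pi_unbounded by (rule LeastI_ex)
  have "m \<noteq> 0"
    using m assms by (intro notI) simp
  then obtain k where k: "m = Suc k"
    using not0_implies_Suc by blast
  have "\<not> n \<le> primes_pi k"
    using not_less_Least[of k "\<lambda>m. n \<le> primes_pi m"] unfolding m_def[symmetric] k by simp
  \<comment> \<open>primes_pi grows by at most one per step, so it first reaches n at a prime\<close>
  with m have "prime m \<and> primes_pi m = n"
    unfolding k primes_pi_Suc by (auto split: if_splits)
  then show ?thesis by blast
qed

lemma
  assumes "n \<ge> 1"
  shows prime_nthp: "prime (nthp n)" and primes_pi_nthp: "primes_pi (nthp n) = n"
proof -
  obtain p where p: "prime p" "primes_pi p = n"
    using ex_prime_primes_pi_eq[OF assms] by blast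
  have "nthp n = p"
    unfolding nthp_def
  proof (rule the_equality)
    show "prime p \<and> card {r. prime r \<and> r \<le> p} = n"
      using p unfolding primes_pi_def by simp
  next
    fix q :: nat
    assume "prime q \<and> card {r. prime r \<and> r \<le> q} = n"
    then have "prime q" "primes_pi q = n"
      unfolding primes_pi_def by simp_all
    with p show "q = p"
      using primes_pi_less_prime by (metis less_irrefl linorder_neqE_nat)
  qed
  with p show "prime (nthp n)" "primes_pi (nthp n) = n"
    by simp_all
qed

lemma primes_pi_less_iff_less_nthp:
  assumes "n \<ge> 1"
  shows "primes_pi m < n \<longleftrightarrow> m < nthp n"
proof -
  note p = prime_nthp[OF assms] primes_pi_nthp[OF assms]
  show ?thesis
  proof
    assume "primes_pi m < n"
    with p(2) show "m < nthp n"
      using primes_pi_mono[of "nthp n" m] by linarith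
  next
    assume "m < nthp n"
    then show "primes_pi m < n"
      using primes_pi_less_prime[OF p(1)] p(2) by simp
  qed
qed

lemma floor_inverse_one_plus:
  assumes "t \<ge> 0"
  shows "\<lfloor>1 / (1 + t :: real)\<rfloor> = (if t = 0 then 1 else 0)"
proof (cases "t = 0")
  case False
  with assms have "0 \<le> 1 / (1 + t)" "1 / (1 + t) < 1"
    by auto
  with False show ?thesis by (simp add: floor_eq_iff)
qed simp

lemma floor_gcd_divide:
  assumes "k > 0"
  shows "\<lfloor>real (gcd k n) / real k\<rfloor> = (if k dvd n then 1 else 0)"
proof (cases "k dvd n")
  case True
  then have "gcd k n = k" by (simp add: gcd_nat.absorb1)
  with True assms show ?thesis by simp
next
  case False
  then have "gcd k n \<noteq> k"
    by (metis gcd_dvd2)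
  with assms have "gcd k n < k"
    using gcd_le1_nat[of k n] by linarith
  with False assms show ?thesis
    by (simp add: floor_eq_iff)
qed

lemma I_fun_eq:
  assumes "j \<ge> 2"
  shows "I_fun j = (if prime j then 1 else 0)"
proof -
  let ?D = "{2..<j} \<inter> {k. k dvd j}"
  have "{2..j-1} = {2..<j}"
    using assms by auto
  then have "(\<Sum>k=2..j-1. real_of_int \<lfloor>real (gcd k j) / real k\<rfloor>) = (\<Sum>k\<in>{2..<j}. if k dvd j then 1 else 0)"
    by (intro sum.cong) (simp_all add: floor_gcd_divide)
  also have "\<dots> = real (card ?D)"
    by (simp add: sum.If_cases)
  finally have "I_fun j = (if card ?D = 0 then 1 else 0)"
    unfolding I_fun_def by (simp add: floor_inverse_one_plus)
  moreover have "card ?D = 0 \<longleftrightarrow> prime j"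
    using assms by (auto simp: prime_nat_iff')
  ultimately show ?thesis by simp
qed

lemma S_fun_eq_primes_pi: "S_fun i = int (primes_pi i)"
proof (induction i)
  case 0
  then show ?case by (simp add: S_fun_def)
next
  case (Suc i)
  show ?case
  proof (cases "i = 0")
    case True
    then show ?thesis by (simp add: S_fun_def primes_pi_Suc)
  next
    case False
    then have "S_fun (Suc i) = S_fun i + I_fun (Suc i)"
      unfolding S_fun_def by (simp add: sum.cl_ivl_Suc)
    with Suc False show ?thesis
      by (simp add: I_fun_eq primes_pi_Suc)
  qed
qed

lemma A_fun_eq: "A_fun i x = (if primes_pi i \<le> x then 1 else 0)"
proof -
  have "\<lfloor>real_of_int (S_fun i) / real (x + 1)\<rfloor> = int (primes_pi i div (x + 1))"
    using floor_divide_of_nat_eq[of "primes_pi i" "x + 1"] by (simp add: S_fun_eq_primes_pi)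
  moreover have "primes_pi i div (x + 1) = 0 \<longleftrightarrow> primes_pi i \<le> x"
    by (simp add: div_eq_0_iff less_Suc_eq_le)
  ultimately show ?thesis
    unfolding A_fun_def by (simp add: floor_inverse_one_plus)
qed

theorem mainTheorem1:
  fixes U :: "nat \<Rightarrow> nat"
  assumes "\<And>x. U x \<ge> nthp (x + 1) - 1"
  shows "\<forall>x. f_U U x = int (nthp (x + 1))"
proof
  fix x
  define q where "q = nthp (x + 1)"
  have "q \<ge> 2"
    using prime_nthp[of "x + 1"] prime_ge_2_nat unfolding q_def by simp
  have below_q: "primes_pi i \<le> x \<longleftrightarrow> i < q" for i
    using primes_pi_less_iff_less_nthp[of "x + 1" i] unfolding q_def by (simp add: less_Suc_eq_le)
  have "(\<Sum>i=1..U x. A_fun i x) = (\<Sum>i=1..U x. if i < q then 1 else 0)"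
    by (intro sum.cong) (simp_all add: A_fun_eq below_q)
  also have "\<dots> = int (card ({1..U x} \<inter> {..<q}))"
    by (simp add: sum.If_cases lessThan_def)
  also have "{1..U x} \<inter> {..<q} = {1..q - 1}"
    using assms[of x] \<open>q \<ge> 2\<close> unfolding q_def[symmetric] by auto
  finally show "f_U U x = int (nthp (x + 1))"
    unfolding f_U_def q_def[symmetric] using \<open>q \<ge> 2\<close> by simp
qed

end
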